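(* Let $n\ge1$ and $a=(a_0,\dots,a_n)\in\mathbb{Z}^{n+1}$ with $a_i\ge 0$ for all $i$ and $a_0=a_n=0$. Let $m\ge 0$ and let $0=c_0<c_1<\cdots<c_m<c_{m+1}=1$ and $0=e_0<e_1<\cdots<e_m<e_{m+1}=1$ be real numbers. Assume that a tropical recurrent minimal sequence $y=(y_i)_{i\in\mathbb{Z}}$ satisfies $a$. For each $i\in\mathbb{Z}$ let $0\le j\le m$ be the unique index with $c_j\le \langle y_i\rangle<c_{j+1}$ and put $x_i:=\lfloor y_i\rfloor+e_j$. Then $x=(x_i)_{i\in\mathbb{Z}}$ is also a tropical recurrent minimal sequence satisfying $a$.
   Context: $\langle e\rangle=e-\lfloor e\rfloor$ denotes the fractional part of a real $e$. A tropical recurrent sequence is $y=(y_j)_{j\in\mathbb{Z}}$ with real entries; it satisfies $a$ if for every $k\in\mathbb{Z}$ the minimum $\min_{0\le i\le n}\{a_i+y_{i+k}\}$ is attained for at least two different indices $i$; it is minimal if for every $j\in\mathbb{Z}$ there is $k$ with $j-n\le k\le j$ and $a_{j-k}+y_j=\min_{0\le i\le n}\{a_i+y_{i+k}\}$. *)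

theory Defs
  imports Complex_Main
begin

definition trop_min :: "nat \<Rightarrow> (nat \<Rightarrow> int) \<Rightarrow> (int \<Rightarrow> real) \<Rightarrow> int \<Rightarrow> real" where
  "trop_min n a y k = Min ((\<lambda>i. real_of_int (a i) + y (int i + k)) ` {0..n})"

definition trop_satisfies :: "nat \<Rightarrow> (nat \<Rightarrow> int) \<Rightarrow> (int \<Rightarrow> real) \<Rightarrow> bool" where
  "trop_satisfies n a y \<longleftrightarrow> (\<forall>k::int. \<exists>i1 i2. i1 \<le> n \<and> i2 \<le> n \<and> i1 \<noteq> i2 \<and>
      real_of_int (a i1) + y (int i1 + k) = trop_min n a y k \<and>
      real_of_int (a i2) + y (int i2 + k) = trop_min n a y k)"

definition trop_minimal :: "nat \<Rightarrow> (nat \<Rightarrow> int) \<Rightarrow> (int \<Rightarrow> real) \<Rightarrow> bool" where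
  "trop_minimal n a y \<longleftrightarrow> (\<forall>j::int. \<exists>k::int. j - int n \<le> k \<and> k \<le> j \<and>
      real_of_int (a (nat (j - k))) + y j = trop_min n a y k)"

definition fracpart :: "real \<Rightarrow> real" where
  "fracpart r = r - real_of_int \<lfloor>r\<rfloor>"

end

theory Submission
  imports Defs
begin

text \<open>
  Write \<open>x i = f (y i)\<close> with \<open>f t = \<lfloor>t\<rfloor> + e\<^sub>j\<close>, where \<open>j\<close> is the cell of the partition \<open>c\<close>
  containing \<open>\<langle>t\<rangle>\<close>. The map \<open>f\<close> is nondecreasing and commutes with integer translations.
  Since the coefficients \<open>a\<^sub>i\<close> are integers, \<open>f\<close> therefore commutes with every
  \<open>t \<mapsto> a\<^sub>i + t\<close> and with finite minima, so it maps each window minimum of \<open>y\<close>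
  to that of \<open>x\<close> and preserves every index at which a minimum is attained.
\<close>

lemma ascending_less:
  fixes c :: "nat \<Rightarrow> 'a::order"
  assumes "\<forall>j\<le>m. c j < c (Suc j)" and "i < j" and "j \<le> Suc m"
  shows "c i < c j"
  by (rule lift_Suc_mono_less_ivl[of "{..m}"]) (use assms in auto)

lemma ascending_le:
  fixes c :: "nat \<Rightarrow> 'a::order"
  assumes "\<forall>j\<le>m. c j < c (Suc j)" and "i \<le> j" and "j \<le> Suc m"
  shows "c i \<le> c j"
  using ascending_less[OF assms(1) _ assms(3), of i] assms(2) by (cases "i = j") auto

definition cell_index :: "nat \<Rightarrow> (nat \<Rightarrow> real) \<Rightarrow> real \<Rightarrow> nat" where
  "cell_index m c r = (THE j. j \<le> m \<and> c j \<le> r \<and> r < c (Suc j))"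

lemma cell_le_cell:
  fixes c :: "nat \<Rightarrow> real"
  assumes "\<forall>j\<le>m. c j < c (Suc j)" and "j \<le> m" and "c j \<le> r"
    and "r \<le> s" and "s < c (Suc k)"
  shows "j \<le> k"
proof (rule ccontr)
  assume "\<not> j \<le> k"
  then have "c (Suc k) \<le> c j"
    using ascending_le[OF assms(1), of "Suc k" j] assms(2) by simp
  then show False using assms(3-5) by simp
qed

lemma cell_exists:
  fixes c :: "nat \<Rightarrow> real"
  assumes "c 0 \<le> r" and "r < c (Suc m)"
  shows "\<exists>j. j \<le> m \<and> c j \<le> r \<and> r < c (Suc j)"
proof -
  define C where "C = {j. j \<le> m \<and> c j \<le> r}"
  have "finite C" and "0 \<in> C" using assms(1) by (auto simp: C_def)
  then have "Max C \<in> C" and Max_ge: "\<And>j. j \<in> C \<Longrightarrow> j \<le> Max C"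
    by (auto intro: Max_in)
  moreover have "r < c (Suc (Max C))"
  proof (cases "Max C = m")
    case False
    then have "Suc (Max C) \<notin> C" using Max_ge by fastforce
    then show ?thesis using \<open>Max C \<in> C\<close> False by (auto simp: C_def)
  qed (use assms(2) in simp)
  ultimately show ?thesis unfolding C_def by blast
qed

lemma cell_index:
  fixes c :: "nat \<Rightarrow> real"
  assumes "\<forall>j\<le>m. c j < c (Suc j)" and "c 0 \<le> r" and "r < c (Suc m)"
  shows "cell_index m c r \<le> m" and "c (cell_index m c r) \<le> r"
    and "r < c (Suc (cell_index m c r))"
proof -
  have "\<exists>!j. j \<le> m \<and> c j \<le> r \<and> r < c (Suc j)"
    using cell_exists[OF assms(2,3)] cell_le_cell[OF assms(1)]
    by (metis order.refl order.antisym)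
  from theI'[OF this] show "cell_index m c r \<le> m" and "c (cell_index m c r) \<le> r"
    and "r < c (Suc (cell_index m c r))"
    unfolding cell_index_def by auto
qed

lemma cell_index_mono:
  fixes c :: "nat \<Rightarrow> real"
  assumes "\<forall>j\<le>m. c j < c (Suc j)" and "c 0 \<le> r" and "r \<le> s" and "s < c (Suc m)"
  shows "cell_index m c r \<le> cell_index m c s"
proof (rule cell_le_cell[OF assms(1) _ _ assms(3)])
  show "cell_index m c r \<le> m" and "c (cell_index m c r) \<le> r"
    using cell_index(1,2)[OF assms(1,2)] assms(3,4) by simp_all
  show "s < c (Suc (cell_index m c s))"
    using cell_index(3)[OF assms(1) _ assms(4)] assms(2,3) by simp
qed

lemma fracpart_bounds: "0 \<le> fracpart t" "fracpart t < 1"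
  unfolding fracpart_def by linarith+

lemma fracpart_add_of_int [simp]: "fracpart (real_of_int z + t) = fracpart t"
  unfolding fracpart_def by simp

definition requantize :: "nat \<Rightarrow> (nat \<Rightarrow> real) \<Rightarrow> (nat \<Rightarrow> real) \<Rightarrow> real \<Rightarrow> real" where
  "requantize m c e t = real_of_int \<lfloor>t\<rfloor> + e (cell_index m c (fracpart t))"

lemma requantize_add_of_int:
  "requantize m c e (real_of_int z + t) = real_of_int z + requantize m c e t"
proof -
  have "\<lfloor>real_of_int z + t\<rfloor> = z + \<lfloor>t\<rfloor>" by linarith
  then show ?thesis unfolding requantize_def by simp
qed

lemma requantize_mono:
  fixes c e :: "nat \<Rightarrow> real"
  assumes c: "\<forall>j\<le>m. c j < c (Suc j)" and "c 0 \<le> 0" and "1 \<le> c (Suc m)"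
    and e: "\<forall>j\<le>m. e j < e (Suc j)" and "0 \<le> e 0" and "e (Suc m) \<le> 1"
  shows "mono (requantize m c e)"
proof (rule monoI)
  fix t s :: real
  assume "t \<le> s"
  let ?J = "\<lambda>t. cell_index m c (fracpart t)"
  have J: "?J t \<le> m" for t
    using cell_index(1)[OF c, of "fracpart t"] fracpart_bounds[of t] assms(2,3) by simp
  have e_bounds: "0 \<le> e (?J t)" "e (?J t) < 1" for t
    using ascending_le[OF e, of 0 "?J t"] ascending_less[OF e, of "?J t" "Suc m"] J[of t]
      assms(5,6) by simp_all
  show "requantize m c e t \<le> requantize m c e s"
  proof (cases "\<lfloor>t\<rfloor> < \<lfloor>s\<rfloor>")
    case True
    then show ?thesis
      unfolding requantize_def using e_bounds[of t] e_bounds[of s] by linarith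
  next
    case False
    then have same_floor: "\<lfloor>t\<rfloor> = \<lfloor>s\<rfloor>" using \<open>t \<le> s\<close> floor_mono by fastforce
    then have "fracpart t \<le> fracpart s" using \<open>t \<le> s\<close> unfolding fracpart_def by simp
    then have "?J t \<le> ?J s"
      using cell_index_mono[OF c] fracpart_bounds assms(2,3) by (meson order_trans less_le_trans)
    then have "e (?J t) \<le> e (?J s)" using ascending_le[OF e] J[of s] by simp
    then show ?thesis unfolding requantize_def using same_floor by simp
  qed
qed

lemma trop_min_comp:
  fixes f :: "real \<Rightarrow> real"
  assumes "mono f" and "\<And>z t. f (real_of_int z + t) = real_of_int z + f t"
  shows "trop_min n a (f \<circ> y) k = f (trop_min n a y k)"
proof -
  have "(\<lambda>i. real_of_int (a i) + (f \<circ> y) (int i + k)) ` {0..n}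
      = f ` ((\<lambda>i. real_of_int (a i) + y (int i + k)) ` {0..n})"
    by (auto simp: assms(2) image_image)
  then show ?thesis
    unfolding trop_min_def using mono_Min_commute[OF assms(1)] by simp
qed

lemma trop_minimal_comp:
  fixes f :: "real \<Rightarrow> real"
  assumes "mono f" and "\<And>z t. f (real_of_int z + t) = real_of_int z + f t"
    and "trop_minimal n a y"
  shows "trop_minimal n a (f \<circ> y)"
  using assms(3) unfolding trop_minimal_def trop_min_comp[OF assms(1,2)]
  by (metis assms(2) comp_apply)

lemma trop_satisfies_comp:
  fixes f :: "real \<Rightarrow> real"
  assumes "mono f" and "\<And>z t. f (real_of_int z + t) = real_of_int z + f t"
    and "trop_satisfies n a y"
  shows "trop_satisfies n a (f \<circ> y)"
  using assms(3) unfolding trop_satisfies_def trop_min_comp[OF assms(1,2)]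
  by (metis assms(2) comp_apply)

theorem lemma3:
  fixes n m :: nat and a :: "nat \<Rightarrow> int" and c e :: "nat \<Rightarrow> real" and y :: "int \<Rightarrow> real"
  assumes "n \<ge> 1"
    and "\<forall>i\<le>n. a i \<ge> 0" and "a 0 = 0" and "a n = 0"
    and "c 0 = 0" and "c (m + 1) = 1" and "\<forall>j\<le>m. c j < c (Suc j)"
    and "e 0 = 0" and "e (m + 1) = 1" and "\<forall>j\<le>m. e j < e (Suc j)"
    and "trop_minimal n a y" and "trop_satisfies n a y"
  shows "let x = (\<lambda>i. real_of_int \<lfloor>y i\<rfloor> +
                  e (THE j. j \<le> m \<and> c j \<le> fracpart (y i) \<and> fracpart (y i) < c (Suc j)))
         in trop_minimal n a x \<and> trop_satisfies n a x"
proof -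
  have "mono (requantize m c e)"
    using requantize_mono[of m c e] assms(5-10) by simp
  then have "trop_minimal n a (requantize m c e \<circ> y)"
    and "trop_satisfies n a (requantize m c e \<circ> y)"
    using trop_minimal_comp trop_satisfies_comp requantize_add_of_int assms(11,12) by blast+
  then show ?thesis
    unfolding Let_def comp_def requantize_def cell_index_def by (rule conjI)
qed

end
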